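(* Let $B$ be an $n\times n$ matrix with integer entries such that $\mathrm{Trace}(B)\le n$. Then all eigenvalues of $B$ are real and positive if and only if $B=I+N$, where $I$ is the $n\times n$ identity matrix and $N$ is a nilpotent matrix.
   Context: Eigenvalues are taken over $\mathbb{C}$. *)

theory Defs
  imports "Jordan_Normal_Form.Char_Poly"
begin

definition nilpotent_mat :: "'a :: semiring_1 mat \<Rightarrow> bool" where
  "nilpotent_mat N \<longleftrightarrow> (\<exists>k. N ^\<^sub>m k = 0\<^sub>m (dim_row N) (dim_col N))"

definition mat_trace :: "'a :: comm_monoid_add mat \<Rightarrow> 'a" where
  "mat_trace A = (\<Sum>i<dim_row A. A $$ (i, i))"

end

theory Submission
  imports
    Defs
    "Jordan_Normal_Form.Schur_Decomposition"
    "Jordan_Normal_Form.Jordan_Normal_Form_Uniqueness"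
begin

text \<open>
  Over \<open>\<complex>\<close> the matrix \<open>B\<close> is similar to an upper triangular matrix whose diagonal lists the
  eigenvalues, so their product is \<open>det B\<close> and their sum is \<open>tr B\<close>. If they are positive reals,
  then \<open>det B\<close> is a positive integer, so the eigenvalues \<open>x\<^sub>i\<close> satisfy \<open>\<Prod> x\<^sub>i \<ge> 1\<close> and
  \<open>\<Sum> x\<^sub>i \<le> n\<close>; as \<open>ln x \<le> x - 1\<close> with equality only at \<open>x = 1\<close>, every eigenvalue is \<open>1\<close>,
  and the triangular form shows \<open>(B - I)\<^sup>n = 0\<close>. Conversely, an eigenvalue \<open>z\<close> of \<open>I + N\<close>
  yields the eigenvalue \<open>(z - 1)\<^sup>k\<close> of \<open>N\<^sup>k = 0\<close>, so \<open>z = 1\<close>.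
\<close>

lemma eq_1_if_prod_list_ge_1_sum_list_le_length:
  fixes xs :: "real list"
  assumes pos: "\<forall>x\<in>set xs. x > 0"
    and prod: "prod_list xs \<ge> 1" and sum: "sum_list xs \<le> length xs"
    and x: "x \<in> set xs"
  shows "x = 1"
proof -
  let ?gap = "\<lambda>y. y - 1 - ln y"
  have gap_nonneg: "?gap y \<ge> 0" if "y \<in> set xs" for y
    using pos that ln_le_minus_one by fastforce
  have "prod_list xs > 0 \<and> ln (prod_list xs) = sum_list (map ln xs)"
    using pos by (induct xs) (auto simp: ln_mult)
  moreover have "sum_list (map ?gap xs) = sum_list xs - length xs - sum_list (map ln xs)"
    by (induct xs) auto
  ultimately have "sum_list (map ?gap xs) \<le> 0"
    using prod sum ln_ge_zero[OF prod] by simp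
  with gap_nonneg have "\<forall>y\<in>set xs. ?gap y = 0"
    using sum_list_nonneg_eq_0_iff[of "map ?gap xs"] sum_list_nonneg[of "map ?gap xs"] by force
  then show ?thesis
    using x pos ln_eq_minus_one by force
qed

lemma mat_trace_mult_comm:
  fixes A B :: "'a::comm_semiring_0 mat"
  assumes A: "A \<in> carrier_mat n m" and B: "B \<in> carrier_mat m n"
  shows "mat_trace (A * B) = mat_trace (B * A)"
proof -
  have "mat_trace (A * B) = (\<Sum>i<n. \<Sum>j<m. A $$ (i,j) * B $$ (j,i))"
    using A B unfolding mat_trace_def
    by (auto simp: scalar_prod_def atLeast0LessThan intro!: sum.cong)
  also have "\<dots> = (\<Sum>j<m. \<Sum>i<n. B $$ (j,i) * A $$ (i,j))"
    by (subst sum.swap) (simp add: mult.commute)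
  also have "\<dots> = mat_trace (B * A)"
    using A B unfolding mat_trace_def
    by (auto simp: scalar_prod_def atLeast0LessThan intro!: sum.cong)
  finally show ?thesis .
qed

lemma mat_trace_similar:
  fixes A B :: "'a::comm_semiring_1 mat"
  assumes "similar_mat A B"
  shows "mat_trace A = mat_trace B"
proof -
  from similar_matD[OF assms] obtain n P Q where
    carrier: "{A, B, P, Q} \<subseteq> carrier_mat n n" and QP: "Q * P = 1\<^sub>m n" and AB: "A = P * B * Q"
    by blast
  then have B: "B \<in> carrier_mat n n" and P: "P \<in> carrier_mat n n" and Q: "Q \<in> carrier_mat n n"
    by auto
  have "mat_trace A = mat_trace (Q * (P * B))"
    unfolding AB using B P Q by (intro mat_trace_mult_comm[of _ n n]) auto
  also have "Q * (P * B) = (Q * P) * B"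
    by (rule assoc_mult_mat[symmetric, OF Q P B])
  also have "\<dots> = B"
    unfolding QP by (rule left_mult_one_mat[OF B])
  finally show ?thesis .
qed

lemma mat_trace_eq_sum_list_diag_mat: "mat_trace A = sum_list (diag_mat A)"
  unfolding mat_trace_def diag_mat_def
  by (simp add: interv_sum_list_conv_sum_set_nat atLeast0LessThan)

lemma schur_triangular_form:
  fixes A :: "'a::conjugatable_ordered_field mat"
  assumes "A \<in> carrier_mat n n" and "char_poly A = (\<Prod>e \<leftarrow> es. [:- e, 1:])"
  obtains T P Q where "similar_mat_wit A T P Q" and "upper_triangular T" and "diag_mat T = es"
proof -
  obtain T P Q where "schur_decomposition A es = (T, P, Q)"
    by (metis prod_cases3)
  then show thesis
    using schur_decomposition[OF assms] that by blast
qed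

lemma det_eq_prod_list_char_poly_roots:
  fixes A :: "'a::conjugatable_ordered_field mat"
  assumes A: "A \<in> carrier_mat n n" and char_poly: "char_poly A = (\<Prod>e \<leftarrow> es. [:- e, 1:])"
  shows "det A = prod_list es"
proof -
  obtain T P Q where wit: "similar_mat_wit A T P Q" and ut: "upper_triangular T"
    and diag: "diag_mat T = es"
    using schur_triangular_form[OF A char_poly] .
  have T: "T \<in> carrier_mat n n"
    using similar_mat_witD2[OF A wit] by auto
  have "det A = det T"
    using wit by (intro det_similar) (auto simp: similar_mat_def)
  also have "\<dots> = prod_list es"
    unfolding det_upper_triangular[OF ut T] diag ..
  finally show ?thesis .
qed

lemma mat_trace_eq_sum_list_char_poly_roots:
  fixes A :: "'a::conjugatable_ordered_field mat"
  assumes A: "A \<in> carrier_mat n n" and char_poly: "char_poly A = (\<Prod>e \<leftarrow> es. [:- e, 1:])"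
  shows "mat_trace A = sum_list es"
proof -
  obtain T P Q where wit: "similar_mat_wit A T P Q" and diag: "diag_mat T = es"
    using schur_triangular_form[OF A char_poly] .
  have "mat_trace A = mat_trace T"
    using wit by (intro mat_trace_similar) (auto simp: similar_mat_def)
  also have "\<dots> = sum_list es"
    unfolding mat_trace_eq_sum_list_diag_mat diag ..
  finally show ?thesis .
qed

lemma strictly_upper_triangular_pow_entry_eq_0:
  fixes S :: "'a::semiring_1 mat"
  assumes S: "S \<in> carrier_mat n n"
    and zero: "\<And>i j. i < n \<Longrightarrow> j < n \<Longrightarrow> j \<le> i \<Longrightarrow> S $$ (i,j) = 0"
  shows "i < n \<Longrightarrow> j < n \<Longrightarrow> j < i + k \<Longrightarrow> (S ^\<^sub>m k) $$ (i,j) = 0"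
proof (induct k arbitrary: j)
  case 0
  then show ?case using S by auto
next
  case (Suc k)
  have "(S ^\<^sub>m Suc k) $$ (i,j) = (\<Sum>l<n. (S ^\<^sub>m k) $$ (i,l) * S $$ (l,j))"
    using S Suc by (simp add: scalar_prod_def atLeast0LessThan)
  also have "\<dots> = 0"
  proof (rule sum.neutral, intro ballI)
    fix l assume l: "l \<in> {..<n}"
    show "(S ^\<^sub>m k) $$ (i,l) * S $$ (l,j) = 0"
      using Suc l zero[of l j] by (cases "l < i + k") auto
  qed
  finally show ?case .
qed

lemma strictly_upper_triangular_pow_dim_eq_0:
  fixes S :: "'a::semiring_1 mat"
  assumes S: "S \<in> carrier_mat n n"
    and zero: "\<And>i j. i < n \<Longrightarrow> j < n \<Longrightarrow> j \<le> i \<Longrightarrow> S $$ (i,j) = 0"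
  shows "S ^\<^sub>m n = 0\<^sub>m n n"
  using S strictly_upper_triangular_pow_entry_eq_0[OF S zero] by (intro eq_matI) auto

lemma char_matrix_pow_dim_eq_0_if_unique_eigenvalue:
  fixes A :: "complex mat"
  assumes A: "A \<in> carrier_mat n n" and unique: "\<And>z. eigenvalue A z \<Longrightarrow> z = c"
  shows "char_matrix A c ^\<^sub>m n = 0\<^sub>m n n"
proof -
  obtain es where char_poly: "char_poly A = (\<Prod>e \<leftarrow> es. [:- e, 1:])"
    using char_poly_factorized[OF A] by blast
  obtain T P Q where wit: "similar_mat_wit A T P Q" and ut: "upper_triangular T"
    and diag: "diag_mat T = es"
    using schur_triangular_form[OF A char_poly] .
  have "n = dim_row A"
    using A by simp
  note carrier = similar_mat_witD[OF this wit]
  have diag_c: "T $$ (i,i) = c" if "i < n" for i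
  proof -
    have "T $$ (i,i) \<in> set es"
      using diag that carrier by (auto simp: diag_mat_def)
    then have "poly (char_poly A) (T $$ (i,i)) = 0"
      unfolding char_poly by (simp add: poly_prod_list_zero_iff)
    then show ?thesis
      using unique eigenvalue_root_char_poly[OF A] by blast
  qed
  have "char_matrix T c $$ (i,j) = 0" if "i < n" "j < n" "j \<le> i" for i j
  proof (cases "j = i")
    case True
    then show ?thesis
      using that diag_c carrier by (simp add: char_matrix_def)
  next
    case False
    then show ?thesis
      using that ut carrier by (simp add: char_matrix_def upper_triangular_def)
  qed
  then have "char_matrix T c ^\<^sub>m n = 0\<^sub>m n n"
    using carrier by (intro strictly_upper_triangular_pow_dim_eq_0) auto
  moreover have "char_matrix A c ^\<^sub>m n = P * char_matrix T c ^\<^sub>m n * Q"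
    by (rule similar_mat_wit_pow_id[OF similar_mat_wit_char_matrix[OF wit]])
  ultimately show ?thesis
    using carrier by auto
qed

lemma eigenvalue_eq_1_if_positive_det_ge_1_trace_le_dim:
  fixes A :: "complex mat"
  assumes A: "A \<in> carrier_mat n n"
    and positive: "\<And>z. eigenvalue A z \<Longrightarrow> z \<in> \<real> \<and> Re z > 0"
    and det: "norm (det A) \<ge> 1" and trace: "Re (mat_trace A) \<le> n"
    and z: "eigenvalue A z"
  shows "z = 1"
proof -
  obtain es where char_poly: "char_poly A = (\<Prod>e \<leftarrow> es. [:- e, 1:])" and len: "length es = n"
    using char_poly_factorized[OF A] by blast
  have root_iff: "eigenvalue A e \<longleftrightarrow> e \<in> set es" for e
    unfolding eigenvalue_root_char_poly[OF A] char_poly by (simp add: poly_prod_list_zero_iff)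
  define rs where "rs = map Re es"
  have es: "es = map of_real rs"
    unfolding rs_def using positive root_iff by (simp add: map_idI Reals_def)
  have rs_pos: "\<forall>r\<in>set rs. r > 0"
    unfolding rs_def using positive root_iff by auto
  have "prod_list rs \<ge> 0"
    using rs_pos by (intro prod_list_nonneg) auto
  then have "prod_list rs = norm (det A)"
    using det_eq_prod_list_char_poly_roots[OF A char_poly] by (simp add: es)
  moreover have "sum_list rs = Re (mat_trace A)"
    using mat_trace_eq_sum_list_char_poly_roots[OF A char_poly]
    by (simp add: es)
  moreover have "length rs = n"
    unfolding rs_def using len by simp
  ultimately have "prod_list rs \<ge> 1" and "sum_list rs \<le> length rs"
    using det trace by simp_all
  then have "\<forall>r\<in>set rs. r = 1"
    using eq_1_if_prod_list_ge_1_sum_list_le_length[OF rs_pos] by blast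
  then show ?thesis
    using z root_iff es by auto
qed

lemma eigenvalue_nilpotent_mat:
  fixes N :: "'a::idom mat"
  assumes N: "N \<in> carrier_mat n n" and "nilpotent_mat N" and "eigenvalue N z"
  shows "z = 0"
proof -
  obtain k where Nk: "N ^\<^sub>m k = 0\<^sub>m n n"
    using assms unfolding nilpotent_mat_def by auto
  obtain v where ev: "eigenvector N v z"
    using assms unfolding eigenvalue_def by auto
  then have v: "v \<in> carrier_vec n" "v \<noteq> 0\<^sub>v n"
    using N unfolding eigenvector_def by auto
  obtain i where i: "i < n" "v $ i \<noteq> 0"
    using v by (metis eq_vecI carrier_vecD index_zero_vec)
  have "z ^ k * v $ i = (N ^\<^sub>m k *\<^sub>v v) $ i"
    using eigenvector_pow[OF N ev] i v by simp
  also have "\<dots> = 0"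
    unfolding Nk using i v by simp
  finally show ?thesis
    using i by simp
qed

lemma char_matrix_one_plus:
  fixes M :: "'a::field mat"
  assumes "M \<in> carrier_mat n n"
  shows "char_matrix (1\<^sub>m n + M) z = char_matrix M (z - 1)"
  using assms by (intro eq_matI) (auto simp: char_matrix_def algebra_simps)

lemma eigenvalue_unipotent:
  fixes N :: "'a::field mat"
  assumes N: "N \<in> carrier_mat n n" and "nilpotent_mat N" and "eigenvalue (1\<^sub>m n + N) z"
  shows "z = 1"
proof -
  have "eigenvalue N (z - 1)"
    using assms eigenvalue_det[of N n] eigenvalue_det[of "1\<^sub>m n + N" n] char_matrix_one_plus[OF N]
    by auto
  then have "z - 1 = 0"
    by (rule eigenvalue_nilpotent_mat[OF N \<open>nilpotent_mat N\<close>])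
  then show ?thesis
    by simp
qed

lemma (in inj_semiring_hom) nilpotent_mat_hom_iff:
  assumes A: "A \<in> carrier_mat n n"
  shows "nilpotent_mat (mat\<^sub>h A) \<longleftrightarrow> nilpotent_mat A"
proof -
  have "(mat\<^sub>h A ^\<^sub>m k = 0\<^sub>m n n) \<longleftrightarrow> (A ^\<^sub>m k = 0\<^sub>m n n)" for k
  proof -
    have "mat\<^sub>h (0\<^sub>m n n) = 0\<^sub>m n n"
      by (intro eq_matI) auto
    then show ?thesis
      using mat_hom_pow[OF A, of k] mat_hom_inj by metis
  qed
  then show ?thesis
    using A unfolding nilpotent_mat_def by simp
qed

lemma unipotent_if_positive_eigenvalues_trace_le_dim:
  fixes B :: "int mat"
  assumes B: "B \<in> carrier_mat n n" and trace: "mat_trace B \<le> int n"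
    and positive: "\<And>z::complex. eigenvalue (map_mat of_int B) z \<Longrightarrow> z \<in> \<real> \<and> Re z > 0"
  shows "nilpotent_mat (B - 1\<^sub>m n)"
proof -
  define A where "A = (map_mat of_int B :: complex mat)"
  have A: "A \<in> carrier_mat n n"
    using B unfolding A_def by simp
  have positive_A: "\<And>z. eigenvalue A z \<Longrightarrow> z \<in> \<real> \<and> Re z > 0"
    using positive unfolding A_def .
  have "char_matrix A 0 = A"
    using A by (intro eq_matI) (auto simp: char_matrix_def)
  moreover have "\<not> eigenvalue A 0"
    using positive_A[of 0] by auto
  ultimately have "det A \<noteq> 0"
    using eigenvalue_det[OF A, of 0] by simp
  moreover have "det A = of_int (det B)"
    unfolding A_def by (simp add: of_int_hom.hom_det)
  ultimately have det_A: "norm (det A) \<ge> 1"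
    by (simp add: norm_of_int)
  have "mat_trace A = of_int (mat_trace B)"
    using B unfolding A_def mat_trace_def by simp
  then have trace_A: "Re (mat_trace A) \<le> n"
    using trace by simp
  have "\<And>z. eigenvalue A z \<Longrightarrow> z = 1"
    by (rule eigenvalue_eq_1_if_positive_det_ge_1_trace_le_dim[OF A positive_A det_A trace_A])
  then have "char_matrix A 1 ^\<^sub>m n = 0\<^sub>m n n"
    by (rule char_matrix_pow_dim_eq_0_if_unique_eigenvalue[OF A])
  moreover have "char_matrix A 1 = map_mat of_int (B - 1\<^sub>m n)"
    using B unfolding A_def char_matrix_def by (intro eq_matI) auto
  ultimately have "nilpotent_mat (map_mat (of_int :: int \<Rightarrow> complex) (B - 1\<^sub>m n))"
    using B unfolding nilpotent_mat_def by auto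
  moreover have "B - 1\<^sub>m n \<in> carrier_mat n n"
    by (intro minus_carrier_mat) simp
  ultimately show ?thesis
    using of_int_hom.nilpotent_mat_hom_iff by blast
qed

theorem mainTheorem3:
  fixes B :: "int mat" and n :: nat
  assumes "B \<in> carrier_mat n n"
    and "mat_trace B \<le> int n"
  shows "(\<forall>z::complex. eigenvalue (map_mat of_int B) z \<longrightarrow> z \<in> \<real> \<and> Re z > 0)
     \<longleftrightarrow> (\<exists>N \<in> carrier_mat n n. nilpotent_mat N \<and> B = 1\<^sub>m n + N)"
proof
  assume "\<forall>z::complex. eigenvalue (map_mat of_int B) z \<longrightarrow> z \<in> \<real> \<and> Re z > 0"
  then have "nilpotent_mat (B - 1\<^sub>m n)"
    using unipotent_if_positive_eigenvalues_trace_le_dim assms by blast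
  moreover have "B = 1\<^sub>m n + (B - 1\<^sub>m n)"
    using assms(1) by (intro eq_matI) auto
  ultimately show "\<exists>N \<in> carrier_mat n n. nilpotent_mat N \<and> B = 1\<^sub>m n + N"
    using assms(1) by (intro bexI[of _ "B - 1\<^sub>m n"]) auto
next
  assume "\<exists>N \<in> carrier_mat n n. nilpotent_mat N \<and> B = 1\<^sub>m n + N"
  then obtain N where N: "N \<in> carrier_mat n n" and "nilpotent_mat N" and B: "B = 1\<^sub>m n + N"
    by blast
  then have "nilpotent_mat (map_mat (of_int :: int \<Rightarrow> complex) N)"
    using of_int_hom.nilpotent_mat_hom_iff by blast
  moreover have "map_mat of_int B = 1\<^sub>m n + map_mat (of_int :: int \<Rightarrow> complex) N"
    unfolding B using N by (intro eq_matI) auto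
  ultimately have "eigenvalue (map_mat of_int B) z \<Longrightarrow> z = 1" for z :: complex
    using eigenvalue_unipotent[of "map_mat of_int N" n] N by auto
  then show "\<forall>z::complex. eigenvalue (map_mat of_int B) z \<longrightarrow> z \<in> \<real> \<and> Re z > 0"
    by fastforce
qed

end
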